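(* Let $n\ge2$, $j\ge0$, $b\in B$, $(\mu_i)_{i=1}^n\in\mathbb Z^n$ and $\mu=-2\mu_1\Lambda_0+(\mu_1-\mu_2)\Lambda_1+\cdots+(\mu_{n-1}-\mu_n)\Lambda_{n-1}+2\mu_n\Lambda_n$. Then $$g_j(b,\mu)=\sum_\gamma q^{\sum_{i\in B,\,i\ne0,\phi}\gamma_i(\gamma_i-1)+\sum_{i\in B}H(b\otimes i)\gamma_i}\begin{bmatrix}j\\ \gamma\end{bmatrix}_{q^2},$$ the sum over $\gamma=(\gamma_i)_{i\in B}\in\mathbb Z_{\ge0}^{2n+2}$ with $\gamma_i-\gamma_{\bar i}=\mu_i$ for $i=1,\dots,n$ and $\sum_{i\in B}\gamma_i=j$.
   Context: Affine algebra $D^{(2)}_{n+1}$ with fundamental weights $\Lambda_0,\dots,\Lambda_n$, $P_{cl}=\bigoplus\mathbb Z\Lambda_i$. $B=\{1,\dots,n,0,\bar n,\dots,\bar1,\phi\}$; on $B\setminus\{\phi\}$ the total order $1\prec\cdots\prec n\prec0\prec\bar n\prec\cdots\prec\bar1$. Weights: $wt(\bar b)=-wt(b)$, $wt(1)=\Lambda_1-2\Lambda_0$, $wt(b)=\Lambda_b-\Lambda_{b-1}$ for $2\le b\le n-1$, $wt(n)=2\Lambda_n-\Lambda_{n-1}$, $wt(0)=wt(\phi)=0$. Energy function: $H(b\otimes b')=0$ if $b,b'\ne\phi$ and $b\prec b'$, or $(b,b')\in\{(0,0),(\phi,\phi)\}$; $H(b\otimes b')=1$ if exactly one of $b,b'$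 is $\phi$; $H(b\otimes b')=2$ if $b,b'\ne\phi$, $b\succeq b'$ and $(b,b')\ne(0,0)$. For $j\ge0$, $b\in B$, $\mu\in P_{cl}$: $g_j(b,\mu)=\sum q^{\sum_{i=1}^j iH(b_{i+1}\otimes b_i)}$, summed over $(b_j,\dots,b_1)\in B^j$ with $wt(b_j)+\cdots+wt(b_1)=\mu$, where $b_{j+1}=b$. For an integer vector $\gamma=(\gamma_b)_{b\in B}$: $\begin{bmatrix}j\\ \gamma\end{bmatrix}_{x}=(x)_j/\prod_{b\in B}(x)_{\gamma_b}$ if $\sum_b\gamma_b=j$ and all $\gamma_b\ge0$, and $0$ otherwise; $(x)_m=\prod_{i=1}^m(1-x^i)$. *)

theory Defs
  imports "HOL-Computational_Algebra.Polynomial"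
begin

text \<open>Elements of the crystal B = {1,...,n,0,nbar,...,1bar,phi}.
  U i is the letter i (1 <= i <= n), Bar i is the letter ibar, Z0 is 0, Phi is phi.\<close>
datatype elt = U nat | Z0 | Bar nat | Phi

definition Bset :: "nat \<Rightarrow> elt set" where
  "Bset n = U ` {1..n} \<union> {Z0} \<union> Bar ` {1..n} \<union> {Phi}"

text \<open>Position in the total order 1 < ... < n < 0 < nbar < ... < 1bar (Phi excluded).\<close>
fun pos :: "nat \<Rightarrow> elt \<Rightarrow> nat" where
  "pos n (U i) = i"
| "pos n Z0 = n + 1"
| "pos n (Bar i) = 2 * n + 2 - i"
| "pos n Phi = 0"

definition H :: "nat \<Rightarrow> elt \<Rightarrow> elt \<Rightarrow> nat" where
  "H n b b' =
     (if b = Phi \<and> b' = Phi then 0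
      else if b = Phi \<or> b' = Phi then 1
      else if b = Z0 \<and> b' = Z0 then 0
      else if pos n b < pos n b' then 0
      else 2)"

text \<open>Weights in P_cl, represented as coefficient functions k \<mapsto> coefficient of Lambda_k
  (zero for k > n).\<close>
definition wtU :: "nat \<Rightarrow> nat \<Rightarrow> nat \<Rightarrow> int" where
  "wtU n i k =
     (if i = 1 then (if k = 1 then 1 else if k = 0 then -2 else 0)
      else if i = n then (if k = n then 2 else if k = n - 1 then -1 else 0)
      else (if k = i then 1 else if k = i - 1 then -1 else 0))"

fun wt :: "nat \<Rightarrow> elt \<Rightarrow> nat \<Rightarrow> int" where
  "wt n (U i) = wtU n i"
| "wt n (Bar i) = (\<lambda>k. - wtU n i k)"
| "wt n Z0 = (\<lambda>k. 0)"
| "wt n Phi = (\<lambda>k. 0)"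

definition muwt :: "nat \<Rightarrow> (nat \<Rightarrow> int) \<Rightarrow> nat \<Rightarrow> int" where
  "muwt n m k =
     (if k = 0 then -2 * m 1
      else if k < n then m k - m (k + 1)
      else if k = n then 2 * m n
      else 0)"

text \<open>q is the polynomial indeterminate; the generating function g_j(b, mu).
  A tuple (b_j,...,b_1) is encoded as a list xs of length j with xs ! (i-1) = b_i,
  and b_{j+1} = b.\<close>
abbreviation qvar :: "int poly" where "qvar \<equiv> [:0, 1:]"

definition g :: "nat \<Rightarrow> nat \<Rightarrow> elt \<Rightarrow> (nat \<Rightarrow> int) \<Rightarrow> int poly" where
  "g n j b mu =
     (\<Sum>xs\<in>{xs. length xs = j \<and> set xs \<subseteq> Bset n \<and>
                (\<lambda>k. \<Sum>y\<leftarrow>xs. wt n y k) = mu}.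
        qvar ^ (\<Sum>i=1..j. i * H n (if i = j then b else xs ! i) (xs ! (i - 1))))"

definition qpoch :: "int poly \<Rightarrow> nat \<Rightarrow> int poly" where
  "qpoch x m = (\<Prod>i=1..m. 1 - x ^ i)"

definition qmultinom :: "int poly \<Rightarrow> elt set \<Rightarrow> nat \<Rightarrow> (elt \<Rightarrow> int) \<Rightarrow> int poly" where
  "qmultinom x Bs j \<gamma> =
     (if (\<Sum>b\<in>Bs. \<gamma> b) = int j \<and> (\<forall>b\<in>Bs. \<gamma> b \<ge> 0)
      then qpoch x j div (\<Prod>b\<in>Bs. qpoch x (nat (\<gamma> b)))
      else 0)"

end

theory Submission
  imports Defs
begin

text \<open>Group the tuples (b_j, ..., b_1) by their content c (the number of occurrences of each
  letter). The weight condition depends only on c and says c_i - c_ibar = mu_i. For a fixed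
  content, the energy generating function F(b, c) satisfies, by removing the first letter,
  F(b, c) = sum_a q^(|c| H(b,a)) F(a, c - e_a). Multiplying by prod_i (q^2;q^2)_(c_i), the claim
  F(b, c) = q^(Q(c) + S(b,c)) [|c|; c]_(q^2), with Q(c) = sum_(i <> 0, phi) c_i (c_i - 1) and
  S(b, c) = sum_i H(b,i) c_i, reduces by induction on |c| to the identity
  sum_a q^(|c| H(b,a) + S(a,c) - H(a,a) c_a) (1 - q^(2 c_a)) = q^S(b,c) (1 - q^(2 |c|)).
  Since H(a,i) is 2 below a and 0 above a in the order 1 < ... < n < 0 < nbar < ... < 1bar,
  the terms of this sum telescope along that order. As the denominator has constant term 1,
  q^(Q(c) + S(b,c)) divides F(b, c), so the division defining [|c|; c] is exact.\<close>

section \<open>Words of given content\<close>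

lemma sum_comp_fun_upd:
  fixes g :: "'b \<Rightarrow> 'c::comm_monoid_add"
  assumes "finite A" "a \<in> A"
  shows "(\<Sum>i\<in>A. g ((c(a := v)) i)) + g (c a) = (\<Sum>i\<in>A. g (c i)) + g v"
proof -
  have "(\<Sum>i\<in>A - {a}. g ((c(a := v)) i)) = (\<Sum>i\<in>A - {a}. g (c i))"
    by (rule sum.cong) auto
  then show ?thesis
    using sum.remove[OF assms, of "\<lambda>i. g ((c(a := v)) i)"] sum.remove[OF assms, of "\<lambda>i. g (c i)"]
    by (simp add: algebra_simps)
qed

fun energy :: "('a \<Rightarrow> 'a \<Rightarrow> nat) \<Rightarrow> 'a \<Rightarrow> 'a list \<Rightarrow> nat" where
  "energy h b [] = 0"
| "energy h b (a # ws) = Suc (length ws) * h b a + energy h a ws"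

lemma weighted_energy_eq_energy_rev:
  "(\<Sum>i=1..length xs. i * h (if i = length xs then b else xs ! i) (xs ! (i - 1)))
     = energy h b (rev xs)"
proof (induction xs arbitrary: b rule: rev_induct)
  case Nil
  show ?case by simp
next
  case (snoc a xs)
  let ?L = "length xs"
  have "(\<Sum>i=1..length (xs @ [a]). i * h (if i = length (xs @ [a]) then b else (xs @ [a]) ! i) ((xs @ [a]) ! (i - 1)))
      = (\<Sum>i=1..?L. i * h (if i = Suc ?L then b else (xs @ [a]) ! i) ((xs @ [a]) ! (i - 1))) + Suc ?L * h b a"
    by (simp add: nth_append)
  also have "(\<Sum>i=1..?L. i * h (if i = Suc ?L then b else (xs @ [a]) ! i) ((xs @ [a]) ! (i - 1)))
      = (\<Sum>i=1..?L. i * h (if i = ?L then a else xs ! i) (xs ! (i - 1)))"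
    by (rule sum.cong) (auto simp: nth_append)
  also have "\<dots> = energy h a (rev xs)" by (rule snoc.IH)
  finally show ?case by simp
qed

definition words_of_content :: "('a \<Rightarrow> nat) \<Rightarrow> 'a list set" where
  "words_of_content c = {ws. count_list ws = c}"

lemma words_of_content_zero: "words_of_content (\<lambda>_. 0) = {[]}"
  by (auto simp: words_of_content_def fun_eq_iff count_list_0_iff)

lemma set_words_of_content:
  assumes "\<forall>x. x \<notin> A \<longrightarrow> c x = 0" "ws \<in> words_of_content c"
  shows "set ws \<subseteq> A"
  using assms count_list_0_iff[of ws] by (auto simp: words_of_content_def)

lemma length_words_of_content:
  assumes "finite A" "\<forall>x. x \<notin> A \<longrightarrow> c x = 0" "ws \<in> words_of_content c"
  shows "length ws = sum c A"
  using sum_count_set[OF set_words_of_content[OF assms(2,3)] assms(1)] assms(3)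
  by (simp add: words_of_content_def)

lemma finite_words_of_content:
  assumes "finite A" "\<forall>x. x \<notin> A \<longrightarrow> c x = 0"
  shows "finite (words_of_content c)"
proof (rule finite_subset)
  show "words_of_content c \<subseteq> {ws. set ws \<subseteq> A \<and> length ws = sum c A}"
    using set_words_of_content[OF assms(2)] length_words_of_content[OF assms] by blast
  show "finite {ws. set ws \<subseteq> A \<and> length ws = sum c A}"
    by (rule finite_lists_length_eq[OF assms(1)])
qed

lemma rev_words_of_content: "rev ` words_of_content c = words_of_content c"
proof -
  have "rev ws \<in> words_of_content c \<longleftrightarrow> ws \<in> words_of_content c" for ws
    by (simp add: words_of_content_def fun_eq_iff)
  then show ?thesis
    by (auto intro: image_eqI[where x = "rev _"])
qed

lemma words_of_content_first_letter:
  assumes "{a. 0 < c a} \<noteq> {}"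
  shows "words_of_content c =
    (\<lambda>(a, ws). a # ws) ` (SIGMA a:{a. 0 < c a}. words_of_content (c(a := c a - 1)))"
proof (intro set_eqI iffI)
  fix zs assume zs: "zs \<in> words_of_content c"
  then obtain a ws where zs_eq: "zs = a # ws"
    using assms by (cases zs) (auto simp: words_of_content_def)
  have "c = count_list (a # ws)" using zs zs_eq by (simp add: words_of_content_def)
  then have "0 < c a" "ws \<in> words_of_content (c(a := c a - 1))"
    by (auto simp: words_of_content_def fun_eq_iff)
  then show "zs \<in> (\<lambda>(a, ws). a # ws) ` (SIGMA a:{a. 0 < c a}. words_of_content (c(a := c a - 1)))"
    using zs_eq by auto
qed (auto simp: words_of_content_def fun_eq_iff)

definition energy_gf :: "('a \<Rightarrow> 'a \<Rightarrow> nat) \<Rightarrow> 'a \<Rightarrow> ('a \<Rightarrow> nat) \<Rightarrow> int poly" where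
  "energy_gf h b c = (\<Sum>ws\<in>words_of_content c. qvar ^ energy h b ws)"

lemma energy_gf_zero: "energy_gf h b (\<lambda>_. 0) = 1"
  by (simp add: energy_gf_def words_of_content_zero)

lemma energy_gf_first_letter:
  assumes A: "finite A" "\<forall>x. x \<notin> A \<longrightarrow> c x = 0" and len: "sum c A = Suc j"
  shows "energy_gf h b c =
    (\<Sum>a\<in>{a\<in>A. 0 < c a}. qvar ^ (Suc j * h b a) * energy_gf h a (c(a := c a - 1)))"
proof -
  let ?W = "\<lambda>a. words_of_content (c(a := c a - 1))"
  have supp: "{a. 0 < c a} = {a\<in>A. 0 < c a}" using A(2) by auto
  have nonempty: "{a. 0 < c a} \<noteq> {}"
  proof
    assume "{a. 0 < c a} = {}"
    then have "sum c A = 0" by auto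
    with len show False by simp
  qed
  have A': "\<forall>x. x \<notin> A \<longrightarrow> (c(a := c a - 1)) x = 0" if "a \<in> A" for a
    using A(2) that by simp
  have len': "length ws = j" if "a \<in> A" "0 < c a" "ws \<in> ?W a" for a ws
    using length_words_of_content[OF A(1) A'[OF that(1)] that(3)] len
      sum_comp_fun_upd[OF A(1) that(1), of "\<lambda>x. x" c "c a - 1"] that(2)
    by simp
  have "energy_gf h b c = (\<Sum>(a, ws)\<in>(SIGMA a:{a\<in>A. 0 < c a}. ?W a). qvar ^ energy h b (a # ws))"
    unfolding energy_gf_def words_of_content_first_letter[OF nonempty] supp
    by (subst sum.reindex) (auto simp: inj_on_def o_def split: prod.splits intro!: sum.cong)
  also have "\<dots> = (\<Sum>a\<in>{a\<in>A. 0 < c a}. \<Sum>ws\<in>?W a. qvar ^ energy h b (a # ws))"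
    using finite_words_of_content[of A "c(a := c a - 1)" for a] A(1) A' by (intro sum.Sigma[symmetric]) auto
  also have "\<dots> = (\<Sum>a\<in>{a\<in>A. 0 < c a}. qvar ^ (Suc j * h b a) * energy_gf h a (c(a := c a - 1)))"
    unfolding energy_gf_def sum_distrib_left
  proof (intro sum.cong refl)
    fix a ws assume "a \<in> {a\<in>A. 0 < c a}" "ws \<in> ?W a"
    then have "length ws = j" using len' by blast
    then show "qvar ^ energy h b (a # ws) = qvar ^ (Suc j * h b a) * qvar ^ energy h a ws"
      by (simp add: power_add)
  qed
  finally show ?thesis .
qed

section \<open>The alphabet in the order of positions\<close>

lemma finite_Bset [simp]: "finite (Bset n)"
  by (simp add: Bset_def)

lemma Phi_in_Bset [simp]: "Phi \<in> Bset n"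
  and Z0_in_Bset [simp]: "Z0 \<in> Bset n"
  and U_in_Bset_iff [simp]: "U i \<in> Bset n \<longleftrightarrow> 1 \<le> i \<and> i \<le> n"
  and Bar_in_Bset_iff [simp]: "Bar i \<in> Bset n \<longleftrightarrow> 1 \<le> i \<and> i \<le> n"
  by (auto simp: Bset_def)

definition elt_of_pos :: "nat \<Rightarrow> nat \<Rightarrow> elt" where
  "elt_of_pos n k = (if k \<le> n then U k else if k = n + 1 then Z0 else Bar (2 * n + 2 - k))"

lemma elt_of_pos_in_Bset: "k \<in> {1..2*n+1} \<Longrightarrow> elt_of_pos n k \<in> Bset n - {Phi}"
  by (auto simp: elt_of_pos_def)

lemma pos_elt_of_pos: "k \<in> {1..2*n+1} \<Longrightarrow> pos n (elt_of_pos n k) = k"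
  by (auto simp: elt_of_pos_def)

lemma elt_of_pos_pos: "x \<in> Bset n - {Phi} \<Longrightarrow> elt_of_pos n (pos n x) = x"
  and pos_in_range: "x \<in> Bset n - {Phi} \<Longrightarrow> pos n x \<in> {1..2*n+1}"
  by (cases x; auto simp: elt_of_pos_def)+

lemma bij_betw_elt_of_pos: "bij_betw (elt_of_pos n) {1..2*n+1} (Bset n - {Phi})"
proof (rule bij_betw_byWitness[where f' = "pos n"])
  show "\<forall>k\<in>{1..2*n+1}. pos n (elt_of_pos n k) = k" using pos_elt_of_pos by blast
  show "\<forall>x\<in>Bset n - {Phi}. elt_of_pos n (pos n x) = x" using elt_of_pos_pos by blast
  show "elt_of_pos n ` {1..2*n+1} \<subseteq> Bset n - {Phi}" using elt_of_pos_in_Bset by (simp add: image_subset_iff)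
  show "pos n ` (Bset n - {Phi}) \<subseteq> {1..2*n+1}" using pos_in_range by (simp add: image_subset_iff)
qed

lemma sum_Bset_by_pos:
  "(\<Sum>a\<in>Bset n. f a) = f Phi + (\<Sum>k=1..2*n+1. f (elt_of_pos n k))"
  using sum.remove[OF finite_Bset Phi_in_Bset, of f n] sum.reindex_bij_betw[OF bij_betw_elt_of_pos, of f n]
  by simp

definition H_threshold :: "nat \<Rightarrow> nat \<Rightarrow> nat" where
  "H_threshold n k = (if k = n + 1 then n else k)"

lemma H_elt_of_pos:
  assumes "k \<in> {1..2*n+1}" "l \<in> {1..2*n+1}"
  shows "H n (elt_of_pos n k) (elt_of_pos n l) = (if l \<le> H_threshold n k then 2 else 0)"
proof -
  have Z0_iff: "elt_of_pos n m = Z0 \<longleftrightarrow> m = n + 1" if "m \<in> {1..2*n+1}" for m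
    using that by (auto simp: elt_of_pos_def)
  show ?thesis
    using assms elt_of_pos_in_Bset[of _ n] Z0_iff[of k] Z0_iff[of l] pos_elt_of_pos[of _ n]
    by (auto simp: H_def H_threshold_def)
qed

lemma H_Phi_elt_of_pos: "k \<in> {1..2*n+1} \<Longrightarrow> H n Phi (elt_of_pos n k) = 1"
  and H_elt_of_pos_Phi: "k \<in> {1..2*n+1} \<Longrightarrow> H n (elt_of_pos n k) Phi = 1"
  using elt_of_pos_in_Bset[of k n] by (auto simp: H_def)

section \<open>Weights\<close>

lemma muwt_add: "muwt n (\<lambda>i. u i + v i) k = muwt n u k + muwt n v k"
  by (simp add: muwt_def algebra_simps)

lemma wtU_eq_muwt:
  assumes "n \<ge> 2" "1 \<le> i" "i \<le> n"
  shows "wtU n i k = muwt n (\<lambda>l. if l = i then 1 else 0) k"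
proof -
  consider "i = 1" | "i = n" | "1 < i \<and> i < n" using assms by linarith
  then show ?thesis
  proof cases
    case 1
    then show ?thesis using assms
      by (cases "k = 0"; cases "k = 1"; cases "k < n"; cases "k = n"; simp add: wtU_def muwt_def; linarith)
  next
    case 2
    then show ?thesis using assms
      by (cases "k = 0"; cases "k = n - 1"; cases "k < n"; cases "k = n"; simp add: wtU_def muwt_def; linarith)
  next
    case 3
    then show ?thesis using assms
      by (cases "k = 0"; cases "k = i"; cases "k = i - 1"; cases "k < n"; cases "k = n"; simp add: wtU_def muwt_def; linarith)
  qed
qed

definition charge :: "elt \<Rightarrow> nat \<Rightarrow> int" where
  "charge y i = (if y = U i then 1 else if y = Bar i then -1 else 0)"

lemma wt_eq_muwt_charge:
  assumes "n \<ge> 2" "y \<in> Bset n"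
  shows "wt n y k = muwt n (charge y) k"
proof (cases y)
  case (U i)
  have "charge y = (\<lambda>l. if l = i then 1 else 0)" by (auto simp: charge_def U)
  then show ?thesis using wtU_eq_muwt[OF assms(1)] assms(2) U by simp
next
  case (Bar i)
  have "charge y = (\<lambda>l. - (if l = i then 1 else 0))" by (auto simp: charge_def Bar)
  then show ?thesis using wtU_eq_muwt[OF assms(1)] assms(2) Bar by (simp add: muwt_def)
qed (simp_all add: charge_def muwt_def)

lemma sum_list_wt:
  assumes "n \<ge> 2" "set xs \<subseteq> Bset n"
  shows "(\<lambda>k. \<Sum>y\<leftarrow>xs. wt n y k) = muwt n (\<lambda>i. int (count_list xs (U i)) - int (count_list xs (Bar i)))"
  using assms(2)
proof (induction xs)
  case Nil
  show ?case by (simp add: muwt_def fun_eq_iff)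
next
  case (Cons y xs)
  have "int (count_list (y # xs) (U i)) - int (count_list (y # xs) (Bar i))
      = charge y i + (int (count_list xs (U i)) - int (count_list xs (Bar i)))" for i
    by (auto simp: charge_def)
  then show ?case
    using Cons wt_eq_muwt_charge[OF assms(1)] by (simp add: muwt_add fun_eq_iff)
qed

lemma muwt_eq_iff:
  assumes "1 \<le> n"
  shows "muwt n u = muwt n v \<longleftrightarrow> (\<forall>i\<in>{1..n}. u i = v i)"
proof
  assume eq: "muwt n u = muwt n v"
  show "\<forall>i\<in>{1..n}. u i = v i"
  proof
    fix i assume i: "i \<in> {1..n}"
    then have "i \<le> n" by simp
    then show "u i = v i"
    proof (induction rule: inc_induct)
      case base
      show ?case using fun_cong[OF eq, of n] assms by (simp add: muwt_def)
    next
      case (step l)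
      then show ?case using fun_cong[OF eq, of l] i by (simp add: muwt_def)
    qed
  qed
next
  assume "\<forall>i\<in>{1..n}. u i = v i"
  then show "muwt n u = muwt n v" using assms by (auto simp: muwt_def fun_eq_iff)
qed

section \<open>The exponent and the telescoping identity\<close>

definition quad_exp :: "nat \<Rightarrow> (elt \<Rightarrow> nat) \<Rightarrow> nat" where
  "quad_exp n c = (\<Sum>i\<in>Bset n - {Z0, Phi}. c i * (c i - 1))"

definition lin_exp :: "nat \<Rightarrow> elt \<Rightarrow> (elt \<Rightarrow> nat) \<Rightarrow> nat" where
  "lin_exp n b c = (\<Sum>i\<in>Bset n. H n b i * c i)"

definition lin_exp_excl :: "nat \<Rightarrow> elt \<Rightarrow> (elt \<Rightarrow> nat) \<Rightarrow> nat" where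
  "lin_exp_excl n a c = (\<Sum>i\<in>Bset n - {a}. H n a i * c i)"

definition partial_content :: "nat \<Rightarrow> (elt \<Rightarrow> nat) \<Rightarrow> nat \<Rightarrow> nat" where
  "partial_content n c k = (\<Sum>l=1..k. c (elt_of_pos n l))"

lemma H_self: "H n a a = (if a = Z0 \<or> a = Phi then 0 else 2)"
  by (simp add: H_def)

lemma lin_exp_eq_excl: "a \<in> Bset n \<Longrightarrow> lin_exp n a c = lin_exp_excl n a c + H n a a * c a"
  unfolding lin_exp_def lin_exp_excl_def by (simp add: sum.remove[OF finite_Bset])

lemma exp_remove_letter:
  assumes a: "a \<in> Bset n" and ca: "0 < c a"
  shows "quad_exp n (c(a := c a - 1)) + lin_exp n a (c(a := c a - 1)) = quad_exp n c + lin_exp_excl n a c"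
proof -
  let ?c = "c(a := c a - 1)"
  have excl: "lin_exp_excl n a ?c = lin_exp_excl n a c"
    unfolding lin_exp_excl_def by (rule sum.cong) auto
  show ?thesis
  proof (cases "a = Z0 \<or> a = Phi")
    case True
    have "quad_exp n ?c = quad_exp n c" unfolding quad_exp_def by (rule sum.cong) (use True in auto)
    then show ?thesis using lin_exp_eq_excl[OF a, of ?c] excl True by (simp add: H_self)
  next
    case False
    then have a': "a \<in> Bset n - {Z0, Phi}" using a by simp
    have "quad_exp n ?c + c a * (c a - 1) = quad_exp n c + (c a - 1) * (c a - 1 - 1)"
      unfolding quad_exp_def using sum_comp_fun_upd[OF _ a', of "\<lambda>x. x * (x - 1)" c] by simp
    moreover have "(c a - 1) * (c a - 1 - 1) + 2 * (c a - 1) = c a * (c a - 1)"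
      using ca by (cases "c a" rule: nat.exhaust; cases "c a - 1") (auto simp: algebra_simps)
    ultimately show ?thesis using lin_exp_eq_excl[OF a, of ?c] excl False by (simp add: H_self)
  qed
qed

lemma partial_content_Suc: "partial_content n c (Suc k) = partial_content n c k + c (elt_of_pos n (Suc k))"
  by (simp add: partial_content_def)

lemma sum_content_by_pos: "sum c (Bset n) = c Phi + partial_content n c (2*n+1)"
  by (simp add: sum_Bset_by_pos partial_content_def)

lemma lin_exp_Phi: "lin_exp n Phi c = partial_content n c (2*n+1)"
proof -
  have "(\<Sum>k=1..2*n+1. H n Phi (elt_of_pos n k) * c (elt_of_pos n k)) = partial_content n c (2*n+1)"
    unfolding partial_content_def by (rule sum.cong) (simp_all add: H_Phi_elt_of_pos)
  then show ?thesis unfolding lin_exp_def sum_Bset_by_pos by (simp add: H_def)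
qed

lemma lin_exp_excl_Phi: "lin_exp_excl n Phi c = partial_content n c (2*n+1)"
  using lin_exp_eq_excl[of Phi n c] lin_exp_Phi[of n c] by (simp add: H_def)

lemma lin_exp_elt_of_pos:
  assumes k: "k \<in> {1..2*n+1}"
  shows "lin_exp n (elt_of_pos n k) c = c Phi + 2 * partial_content n c (H_threshold n k)"
proof -
  let ?t = "H_threshold n k"
  have "(\<Sum>l=1..2*n+1. H n (elt_of_pos n k) (elt_of_pos n l) * c (elt_of_pos n l))
      = (\<Sum>l=1..2*n+1. if l \<le> ?t then 2 * c (elt_of_pos n l) else 0)"
    by (rule sum.cong) (simp_all add: H_elt_of_pos[OF k])
  also have "\<dots> = (\<Sum>l\<in>{l\<in>{1..2*n+1}. l \<le> ?t}. 2 * c (elt_of_pos n l))"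
    by (rule sum.inter_filter[symmetric]) simp
  also have "{l\<in>{1..2*n+1}. l \<le> ?t} = {1..?t}"
    using k by (auto simp: H_threshold_def)
  finally show ?thesis
    unfolding lin_exp_def sum_Bset_by_pos using H_elt_of_pos_Phi[OF k]
    by (simp add: partial_content_def sum_distrib_left)
qed

lemma lin_exp_excl_elt_of_pos:
  assumes k: "k \<in> {1..2*n+1}"
  shows "lin_exp_excl n (elt_of_pos n k) c = c Phi + 2 * partial_content n c (k - 1)"
proof -
  have "lin_exp_excl n (elt_of_pos n k) c + H n (elt_of_pos n k) (elt_of_pos n k) * c (elt_of_pos n k)
      = c Phi + 2 * partial_content n c (H_threshold n k)"
    using lin_exp_eq_excl[of "elt_of_pos n k" n c] lin_exp_elt_of_pos[OF k, of c] elt_of_pos_in_Bset[OF k]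
    by simp
  moreover have "H n (elt_of_pos n k) (elt_of_pos n k) = (if k = n + 1 then 0 else 2)"
    using H_elt_of_pos[OF k k] by (simp add: H_threshold_def)
  moreover have "partial_content n c k = partial_content n c (k - 1) + c (elt_of_pos n k)"
    using partial_content_Suc[of n c "k - 1"] k by simp
  ultimately show ?thesis by (auto simp: H_threshold_def split: if_splits)
qed

lemma sum_weighted_telescope:
  fixes f :: "nat \<Rightarrow> 'a::comm_ring_1"
  assumes "m \<le> N"
  shows "(\<Sum>k=1..N. (if k \<le> m then A else 1) * (f (k - 1) - f k)) = A * (f 0 - f m) + (f m - f N)"
  using assms
proof (induction N rule: dec_induct)
  case base
  have "(\<Sum>k=1..m. f (k - 1) - f k) = f 0 - f m"
    using sum_telescope''[of 0 m "\<lambda>k. - f k"] by (simp add: algebra_simps)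
  then show ?case by (simp add: sum_distrib_left[symmetric])
next
  case (step N)
  then show ?case by (simp add: algebra_simps)
qed

lemma letter_sum_by_pos:
  "(\<Sum>a\<in>Bset n. qvar ^ (e a + lin_exp_excl n a c) * (1 - qvar ^ (2 * c a)))
   = qvar ^ (e Phi + partial_content n c (2*n+1)) * (1 - qvar ^ (2 * c Phi))
     + qvar ^ c Phi * (\<Sum>k=1..2*n+1. qvar ^ e (elt_of_pos n k)
         * (qvar ^ (2 * partial_content n c (k - 1)) - qvar ^ (2 * partial_content n c k)))"
proof -
  have "qvar ^ (e (elt_of_pos n k) + lin_exp_excl n (elt_of_pos n k) c) * (1 - qvar ^ (2 * c (elt_of_pos n k)))
      = qvar ^ c Phi * (qvar ^ e (elt_of_pos n k)
         * (qvar ^ (2 * partial_content n c (k - 1)) - qvar ^ (2 * partial_content n c k)))"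
    if k: "k \<in> {1..2*n+1}" for k
  proof -
    have "partial_content n c k = partial_content n c (k - 1) + c (elt_of_pos n k)"
      using partial_content_Suc[of n c "k - 1"] k by simp
    then show ?thesis
      using lin_exp_excl_elt_of_pos[OF k, of c] by (simp add: power_add algebra_simps)
  qed
  then show ?thesis
    unfolding sum_Bset_by_pos[of _ n] lin_exp_excl_Phi sum_distrib_left
    by (simp add: power_mult[symmetric] mult.commute[of 2])
qed

lemma letter_sum_Phi:
  assumes T: "T = sum c (Bset n)"
  shows "(\<Sum>a\<in>Bset n. qvar ^ (T * H n Phi a + lin_exp_excl n a c) * (1 - qvar ^ (2 * c a)))
         = qvar ^ lin_exp n Phi c * (1 - qvar ^ (2 * T))"
proof -
  define N where "N = 2*n+1"
  define f where "f k = qvar ^ (2 * partial_content n c k)" for k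
  define X where "X = qvar ^ partial_content n c N"
  define Y where "Y = qvar ^ c Phi"
  have T_eq: "T = c Phi + partial_content n c N"
    using sum_content_by_pos[of c n] by (simp add: T N_def)
  have T2: "qvar ^ (2 * T) = X\<^sup>2 * Y\<^sup>2"
    by (simp add: power_even_eq T_eq X_def Y_def power_add power_mult_distrib)
  have f0: "f 0 = 1" by (simp add: f_def partial_content_def)
  have fN: "f N = X\<^sup>2" by (simp add: f_def X_def power_even_eq)
  have sum_eq: "(\<Sum>a\<in>Bset n. qvar ^ (T * H n Phi a + lin_exp_excl n a c) * (1 - qvar ^ (2 * c a)))
      = qvar ^ (T * H n Phi Phi + partial_content n c N) * (1 - Y\<^sup>2)
        + Y * (\<Sum>k=1..N. qvar ^ (T * H n Phi (elt_of_pos n k)) * (f (k - 1) - f k))"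
    using letter_sum_by_pos[of "\<lambda>a. T * H n Phi a" n c] by (simp only: N_def f_def Y_def power_even_eq)
  have "(\<Sum>k=1..N. qvar ^ (T * H n Phi (elt_of_pos n k)) * (f (k - 1) - f k))
      = (\<Sum>k=1..N. (if k \<le> N then qvar ^ T else 1) * (f (k - 1) - f k))"
    by (rule sum.cong) (simp_all add: H_Phi_elt_of_pos N_def)
  also have "\<dots> = X * Y * (1 - X\<^sup>2)"
    using sum_weighted_telescope[of N N "qvar ^ T" f] f0 fN by (simp add: T_eq X_def Y_def power_add)
  finally have inner: "(\<Sum>k=1..N. qvar ^ (T * H n Phi (elt_of_pos n k)) * (f (k - 1) - f k))
      = X * Y * (1 - X\<^sup>2)" .
  have "qvar ^ (T * H n Phi Phi + partial_content n c N) = X"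
    by (simp add: H_def X_def)
  moreover have "qvar ^ lin_exp n Phi c = X"
    by (simp add: lin_exp_Phi X_def N_def)
  moreover have "X * (1 - Y\<^sup>2) + Y * (X * Y * (1 - X\<^sup>2)) = X * (1 - X\<^sup>2 * Y\<^sup>2)"
    by algebra
  ultimately show ?thesis
    unfolding sum_eq inner T2 by simp
qed

lemma letter_sum_elt_of_pos:
  assumes T: "T = sum c (Bset n)" and m: "m \<in> {1..2*n+1}"
  shows "(\<Sum>a\<in>Bset n. qvar ^ (T * H n (elt_of_pos n m) a + lin_exp_excl n a c) * (1 - qvar ^ (2 * c a)))
         = qvar ^ lin_exp n (elt_of_pos n m) c * (1 - qvar ^ (2 * T))"
proof -
  define N where "N = 2*n+1"
  define f where "f k = qvar ^ (2 * partial_content n c k)" for k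
  define X where "X = qvar ^ partial_content n c N"
  define Y where "Y = qvar ^ c Phi"
  define t where "t = H_threshold n m"
  have T_eq: "T = c Phi + partial_content n c N"
    using sum_content_by_pos[of c n] by (simp add: T N_def)
  have T2: "qvar ^ (2 * T) = X\<^sup>2 * Y\<^sup>2"
    by (simp add: power_even_eq T_eq X_def Y_def power_add power_mult_distrib)
  have f0: "f 0 = 1" by (simp add: f_def partial_content_def)
  have fN: "f N = X\<^sup>2" by (simp add: f_def X_def power_even_eq)
  have sum_eq: "(\<Sum>a\<in>Bset n. qvar ^ (T * H n (elt_of_pos n m) a + lin_exp_excl n a c) * (1 - qvar ^ (2 * c a)))
      = qvar ^ (T * H n (elt_of_pos n m) Phi + partial_content n c N) * (1 - Y\<^sup>2)
        + Y * (\<Sum>k=1..N. qvar ^ (T * H n (elt_of_pos n m) (elt_of_pos n k)) * (f (k - 1) - f k))"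
    using letter_sum_by_pos[of "\<lambda>a. T * H n (elt_of_pos n m) a" n c] by (simp only: N_def f_def Y_def power_even_eq)
  have "t \<le> N" using m by (auto simp: t_def H_threshold_def N_def)
  have "(\<Sum>k=1..N. qvar ^ (T * H n (elt_of_pos n m) (elt_of_pos n k)) * (f (k - 1) - f k))
      = (\<Sum>k=1..N. (if k \<le> t then qvar ^ (2 * T) else 1) * (f (k - 1) - f k))"
    by (rule sum.cong) (use m in \<open>simp_all add: H_elt_of_pos t_def N_def mult.commute[of T]\<close>)
  also have "\<dots> = X\<^sup>2 * Y\<^sup>2 * (1 - f t) + (f t - X\<^sup>2)"
    using sum_weighted_telescope[OF \<open>t \<le> N\<close>, of "qvar ^ (2 * T)" f] f0 fN T2 by simp
  finally have inner: "(\<Sum>k=1..N. qvar ^ (T * H n (elt_of_pos n m) (elt_of_pos n k)) * (f (k - 1) - f k))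
      = X\<^sup>2 * Y\<^sup>2 * (1 - f t) + (f t - X\<^sup>2)" .
  have "qvar ^ (T * H n (elt_of_pos n m) Phi + partial_content n c N) = X\<^sup>2 * Y"
    using H_elt_of_pos_Phi[OF m] by (simp add: T_eq X_def Y_def power_add power2_eq_square)
  moreover have "qvar ^ lin_exp n (elt_of_pos n m) c = Y * f t"
    using lin_exp_elt_of_pos[OF m, of c] by (simp add: Y_def f_def t_def power_add)
  moreover have "X\<^sup>2 * Y * (1 - Y\<^sup>2) + Y * (X\<^sup>2 * Y\<^sup>2 * (1 - f t) + (f t - X\<^sup>2))
      = Y * f t * (1 - X\<^sup>2 * Y\<^sup>2)"
    by algebra
  ultimately show ?thesis
    unfolding sum_eq inner T2 by simp
qed

lemma letter_sum_telescopes: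
  assumes "b \<in> Bset n" "T = sum c (Bset n)"
  shows "(\<Sum>a\<in>Bset n. qvar ^ (T * H n b a + lin_exp_excl n a c) * (1 - qvar ^ (2 * c a)))
         = qvar ^ lin_exp n b c * (1 - qvar ^ (2 * T))"
proof (cases "b = Phi")
  case False
  then show ?thesis
    using letter_sum_elt_of_pos[OF assms(2) pos_in_range] elt_of_pos_pos assms(1) by simp
qed (use letter_sum_Phi[OF assms(2)] in simp)

section \<open>Closed form for a fixed content\<close>

lemma prod_qpoch_fun_upd_pred:
  assumes "finite A" "a \<in> A" "0 < c a"
  shows "(\<Prod>i\<in>A. qpoch x (c i)) = (\<Prod>i\<in>A. qpoch x ((c(a := c a - 1)) i)) * (1 - x ^ c a)"
proof -
  have rest: "(\<Prod>i\<in>A - {a}. qpoch x ((c(a := c a - 1)) i)) = (\<Prod>i\<in>A - {a}. qpoch x (c i))"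
    by (rule prod.cong) auto
  have "qpoch x (c a) = qpoch x (c a - 1) * (1 - x ^ c a)"
    using assms(3) by (cases "c a") (simp_all add: qpoch_def)
  then show ?thesis
    unfolding prod.remove[OF assms(1,2), of "\<lambda>i. qpoch x (c i)"]
      prod.remove[OF assms(1,2), of "\<lambda>i. qpoch x ((c(a := c a - 1)) i)"] rest
    by (simp add: mult_ac)
qed

lemma qpoch_Suc: "qpoch x (Suc k) = qpoch x k * (1 - x ^ Suc k)"
  by (simp add: qpoch_def)

lemma closed_form_first_letter:
  assumes b: "b \<in> Bset n" and len: "sum c (Bset n) = Suc j"
  shows "(\<Sum>a\<in>{a\<in>Bset n. 0 < c a}. qvar ^ (Suc j * H n b a)
           * qvar ^ (quad_exp n (c(a := c a - 1)) + lin_exp n a (c(a := c a - 1)))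
           * qpoch (qvar\<^sup>2) j * (1 - qvar ^ (2 * c a)))
         = qvar ^ (quad_exp n c + lin_exp n b c) * qpoch (qvar\<^sup>2) (Suc j)"
proof -
  let ?term = "\<lambda>a. qvar ^ (Suc j * H n b a + lin_exp_excl n a c) * (1 - qvar ^ (2 * c a))"
  have "(\<Sum>a\<in>{a\<in>Bset n. 0 < c a}. qvar ^ (Suc j * H n b a)
           * qvar ^ (quad_exp n (c(a := c a - 1)) + lin_exp n a (c(a := c a - 1)))
           * qpoch (qvar\<^sup>2) j * (1 - qvar ^ (2 * c a)))
      = qvar ^ quad_exp n c * qpoch (qvar\<^sup>2) j * (\<Sum>a\<in>{a\<in>Bset n. 0 < c a}. ?term a)"
    unfolding sum_distrib_left
    by (rule sum.cong) (simp_all only: mem_Collect_eq exp_remove_letter power_add mult_ac)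
  also have "(\<Sum>a\<in>{a\<in>Bset n. 0 < c a}. ?term a) = (\<Sum>a\<in>Bset n. ?term a)"
    by (rule sum.mono_neutral_left) auto
  also have "\<dots> = qvar ^ lin_exp n b c * (1 - qvar ^ (2 * Suc j))"
    using letter_sum_telescopes[OF b len[symmetric]] .
  also have "qvar ^ quad_exp n c * qpoch (qvar\<^sup>2) j * (qvar ^ lin_exp n b c * (1 - qvar ^ (2 * Suc j)))
      = qvar ^ (quad_exp n c + lin_exp n b c) * qpoch (qvar\<^sup>2) (Suc j)"
    unfolding qpoch_Suc power_mult by (simp only: power_add mult_ac)
  finally show ?thesis .
qed

lemma energy_gf_mult_prod_qpoch:
  assumes "b \<in> Bset n" "\<forall>x. x \<notin> Bset n \<longrightarrow> c x = 0" "sum c (Bset n) = j"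
  shows "energy_gf (H n) b c * (\<Prod>i\<in>Bset n. qpoch (qvar\<^sup>2) (c i))
         = qvar ^ (quad_exp n c + lin_exp n b c) * qpoch (qvar\<^sup>2) j"
  using assms
proof (induction j arbitrary: b c)
  case 0
  then have "c = (\<lambda>_. 0)" by (auto simp: fun_eq_iff)
  then show ?case
    by (simp add: energy_gf_zero quad_exp_def lin_exp_def qpoch_def)
next
  case (Suc j)
  let ?c = "\<lambda>a. c(a := c a - 1)"
  let ?D = "\<lambda>c. \<Prod>i\<in>Bset n. qpoch (qvar\<^sup>2) (c i)"
  have "energy_gf (H n) b c * ?D c
      = (\<Sum>a\<in>{a\<in>Bset n. 0 < c a}. qvar ^ (Suc j * H n b a) * energy_gf (H n) a (?c a) * ?D c)"
    using energy_gf_first_letter[OF finite_Bset Suc.prems(2,3)] by (simp add: sum_distrib_right)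
  also have "\<dots> = (\<Sum>a\<in>{a\<in>Bset n. 0 < c a}. qvar ^ (Suc j * H n b a)
      * qvar ^ (quad_exp n (?c a) + lin_exp n a (?c a)) * qpoch (qvar\<^sup>2) j * (1 - qvar ^ (2 * c a)))"
  proof (rule sum.cong[OF refl])
    fix a assume "a \<in> {a\<in>Bset n. 0 < c a}"
    then have a: "a \<in> Bset n" "0 < c a" by auto
    have "sum (?c a) (Bset n) = j"
      using sum_comp_fun_upd[OF finite_Bset a(1), of "\<lambda>x. x" c "c a - 1"] Suc.prems(3) a(2) by simp
    moreover have "\<forall>x. x \<notin> Bset n \<longrightarrow> ?c a x = 0" using Suc.prems(2) a(1) by simp
    ultimately have IH: "energy_gf (H n) a (?c a) * ?D (?c a)
        = qvar ^ (quad_exp n (?c a) + lin_exp n a (?c a)) * qpoch (qvar\<^sup>2) j"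
      using Suc.IH[OF a(1)] by blast
    have D: "?D c = ?D (?c a) * (1 - qvar ^ (2 * c a))"
      using prod_qpoch_fun_upd_pred[of "Bset n" a c "qvar\<^sup>2"] a by (simp add: power_mult)
    have "qvar ^ (Suc j * H n b a) * energy_gf (H n) a (?c a) * ?D c
        = qvar ^ (Suc j * H n b a) * (energy_gf (H n) a (?c a) * ?D (?c a)) * (1 - qvar ^ (2 * c a))"
      by (simp only: D mult_ac)
    then show "qvar ^ (Suc j * H n b a) * energy_gf (H n) a (?c a) * ?D c
        = qvar ^ (Suc j * H n b a) * qvar ^ (quad_exp n (?c a) + lin_exp n a (?c a))
          * qpoch (qvar\<^sup>2) j * (1 - qvar ^ (2 * c a))"
      by (simp only: IH mult.assoc)
  qed
  also have "\<dots> = qvar ^ (quad_exp n c + lin_exp n b c) * qpoch (qvar\<^sup>2) (Suc j)"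
    by (rule closed_form_first_letter[OF Suc.prems(1,3)])
  finally show ?case .
qed

lemma linear_factor_power_dvd_cancel:
  fixes p d :: "'a::idom poly"
  assumes dvd: "[:-a, 1:] ^ e dvd p * d" and d: "poly d a \<noteq> 0"
  shows "[:-a, 1:] ^ e dvd p"
proof (cases "p = 0")
  case False
  have "d \<noteq> 0" using d by auto
  with False have "e \<le> order a (p * d)" using dvd by (simp add: order_divides)
  also have "\<dots> = order a p" using order_mult[of p d a] order_0I[OF d] False \<open>d \<noteq> 0\<close> by simp
  finally show ?thesis by (simp add: order_divides)
qed simp

lemma eq_power_var_mult_div:
  fixes f d p :: "'a::idom_divide poly"
  assumes eq: "f * d = [:0, 1:] ^ e * p" and d: "poly d 0 \<noteq> 0"
  shows "f = [:0, 1:] ^ e * (p div d)"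
proof -
  have "[:0, 1:] ^ e dvd f"
    using linear_factor_power_dvd_cancel[of 0 e f d] eq d by simp
  then obtain g where g: "f = [:0, 1:] ^ e * g" by (elim dvdE)
  then have "g * d = p" using eq by (simp add: mult.assoc)
  moreover have "d \<noteq> 0" using d by auto
  ultimately show ?thesis using g by auto
qed

lemma energy_gf_closed_form:
  assumes "b \<in> Bset n" "\<forall>x. x \<notin> Bset n \<longrightarrow> c x = 0" "sum c (Bset n) = j"
  shows "energy_gf (H n) b c
         = qvar ^ (quad_exp n c + lin_exp n b c) * (qpoch (qvar\<^sup>2) j div (\<Prod>i\<in>Bset n. qpoch (qvar\<^sup>2) (c i)))"
proof (rule eq_power_var_mult_div)
  show "energy_gf (H n) b c * (\<Prod>i\<in>Bset n. qpoch (qvar\<^sup>2) (c i))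
        = qvar ^ (quad_exp n c + lin_exp n b c) * qpoch (qvar\<^sup>2) j"
    by (rule energy_gf_mult_prod_qpoch[OF assms])
  show "poly (\<Prod>i\<in>Bset n. qpoch (qvar\<^sup>2) (c i)) 0 \<noteq> 0"
    by (auto simp: poly_prod qpoch_def power_0_left)
qed

section \<open>Grouping by content\<close>

definition admissible_contents :: "nat \<Rightarrow> nat \<Rightarrow> (nat \<Rightarrow> int) \<Rightarrow> (elt \<Rightarrow> nat) set" where
  "admissible_contents n j m = {c. (\<forall>x. x \<notin> Bset n \<longrightarrow> c x = 0) \<and> sum c (Bset n) = j \<and>
     (\<forall>i\<in>{1..n}. int (c (U i)) - int (c (Bar i)) = m i)}"

lemma finite_admissible_contents: "finite (admissible_contents n j m)"
proof (rule finite_subset)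
  show "admissible_contents n j m \<subseteq> {c. \<forall>x. (x \<in> Bset n \<longrightarrow> c x \<in> {0..j}) \<and> (x \<notin> Bset n \<longrightarrow> c x = 0)}"
    using member_le_sum[of _ "Bset n"] by (fastforce simp: admissible_contents_def)
  show "finite {c. \<forall>x. (x \<in> Bset n \<longrightarrow> c x \<in> {0..j}) \<and> (x \<notin> Bset n \<longrightarrow> c x = 0)}"
    by (rule finite_set_of_finite_funs) auto
qed

lemma words_of_weight_eq_admissible:
  assumes "n \<ge> 2"
  shows "{xs. length xs = j \<and> set xs \<subseteq> Bset n \<and> (\<lambda>k. \<Sum>y\<leftarrow>xs. wt n y k) = muwt n m}
         = {xs. count_list xs \<in> admissible_contents n j m}"
proof -
  have "length xs = j \<and> set xs \<subseteq> Bset n \<and> (\<lambda>k. \<Sum>y\<leftarrow>xs. wt n y k) = muwt n m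
        \<longleftrightarrow> count_list xs \<in> admissible_contents n j m" for xs
  proof
    assume xs: "length xs = j \<and> set xs \<subseteq> Bset n \<and> (\<lambda>k. \<Sum>y\<leftarrow>xs. wt n y k) = muwt n m"
    then have "\<forall>x. x \<notin> Bset n \<longrightarrow> count_list xs x = 0" by (auto intro: count_notin)
    then show "count_list xs \<in> admissible_contents n j m"
      using xs sum_list_wt[OF assms] muwt_eq_iff[of n] sum_count_set[of xs "Bset n"] assms
      by (auto simp: admissible_contents_def)
  next
    assume xs: "count_list xs \<in> admissible_contents n j m"
    then have "set xs \<subseteq> Bset n"
      using count_list_0_iff[of xs] by (auto simp: admissible_contents_def)
    then show "length xs = j \<and> set xs \<subseteq> Bset n \<and> (\<lambda>k. \<Sum>y\<leftarrow>xs. wt n y k) = muwt n m"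
      using xs sum_list_wt[OF assms] muwt_eq_iff[of n] sum_count_set[of xs "Bset n"] assms
      by (auto simp: admissible_contents_def)
  qed
  then show ?thesis by blast
qed

lemma g_eq_sum_energy_gf:
  assumes "n \<ge> 2"
  shows "g n j b (muwt n m) = (\<Sum>c\<in>admissible_contents n j m. energy_gf (H n) b c)"
proof -
  let ?C = "admissible_contents n j m"
  let ?W = "{xs. count_list xs \<in> ?C}"
  have W_sub: "?W \<subseteq> {xs. set xs \<subseteq> Bset n \<and> length xs = j}"
    using words_of_weight_eq_admissible[OF assms, of j m] by blast
  have fiber: "{xs \<in> ?W. count_list xs = c} = words_of_content c" if "c \<in> ?C" for c
    using that by (auto simp: words_of_content_def)
  have "g n j b (muwt n m) = (\<Sum>xs\<in>?W. qvar ^ energy (H n) b (rev xs))"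
    unfolding g_def words_of_weight_eq_admissible[OF assms, symmetric]
  proof (rule sum.cong[OF refl])
    fix xs assume "xs \<in> {xs. length xs = j \<and> set xs \<subseteq> Bset n \<and> (\<lambda>k. \<Sum>y\<leftarrow>xs. wt n y k) = muwt n m}"
    then have j: "j = length xs" by simp
    show "qvar ^ (\<Sum>i=1..j. i * H n (if i = j then b else xs ! i) (xs ! (i - 1)))
        = qvar ^ energy (H n) b (rev xs)"
      unfolding j weighted_energy_eq_energy_rev ..
  qed
  also have "\<dots> = (\<Sum>c\<in>?C. \<Sum>xs\<in>{xs \<in> ?W. count_list xs = c}. qvar ^ energy (H n) b (rev xs))"
    by (rule sum.group[symmetric])
       (use finite_subset[OF W_sub finite_lists_length_eq] finite_admissible_contents in auto)
  also have "\<dots> = (\<Sum>c\<in>?C. energy_gf (H n) b c)"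
  proof (rule sum.cong[OF refl])
    fix c assume "c \<in> ?C"
    have "(\<Sum>xs\<in>words_of_content c. qvar ^ energy (H n) b (rev xs))
        = (\<Sum>ws\<in>rev ` words_of_content c. qvar ^ energy (H n) b ws)"
      by (subst sum.reindex) (auto simp: inj_on_def)
    then show "(\<Sum>xs\<in>{xs \<in> ?W. count_list xs = c}. qvar ^ energy (H n) b (rev xs)) = energy_gf (H n) b c"
      unfolding fiber[OF \<open>c \<in> ?C\<close>] rev_words_of_content energy_gf_def .
  qed
  finally show ?thesis .
qed

lemma sum_admissible_contents_as_int:
  "(\<Sum>c\<in>admissible_contents n j m. F (\<lambda>x. int (c x)))
   = (\<Sum>\<gamma>\<in>{\<gamma> :: elt \<Rightarrow> int. (\<forall>x. x \<notin> Bset n \<longrightarrow> \<gamma> x = 0) \<and> (\<forall>x\<in>Bset n. \<gamma> x \<ge> 0) \<and>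
              (\<forall>i\<in>{1..n}. \<gamma> (U i) - \<gamma> (Bar i) = m i) \<and> (\<Sum>x\<in>Bset n. \<gamma> x) = int j}. F \<gamma>)"
proof (rule sum.reindex_bij_witness[where i = "\<lambda>\<gamma> x. nat (\<gamma> x)" and j = "\<lambda>c x. int (c x)"])
  fix \<gamma> :: "elt \<Rightarrow> int"
  assume \<gamma>: "\<gamma> \<in> {\<gamma>. (\<forall>x. x \<notin> Bset n \<longrightarrow> \<gamma> x = 0) \<and> (\<forall>x\<in>Bset n. \<gamma> x \<ge> 0) \<and>
              (\<forall>i\<in>{1..n}. \<gamma> (U i) - \<gamma> (Bar i) = m i) \<and> (\<Sum>x\<in>Bset n. \<gamma> x) = int j}"
  then have nonneg: "\<gamma> x \<ge> 0" for x by (cases "x \<in> Bset n") auto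
  then show "(\<lambda>x. int (nat (\<gamma> x))) = \<gamma>" by auto
  have "int (\<Sum>x\<in>Bset n. nat (\<gamma> x)) = int j"
    unfolding of_nat_sum using \<gamma> nonneg by simp
  then have "(\<Sum>x\<in>Bset n. nat (\<gamma> x)) = j" by (simp only: of_nat_eq_iff)
  then show "(\<lambda>x. nat (\<gamma> x)) \<in> admissible_contents n j m"
    using \<gamma> nonneg by (auto simp: admissible_contents_def)
qed (auto simp: admissible_contents_def of_nat_sum[symmetric])

lemma qmultinom_of_nat:
  assumes "sum c A = j"
  shows "qmultinom x A j (\<lambda>a. int (c a)) = qpoch x j div (\<Prod>a\<in>A. qpoch x (c a))"
  using assms by (simp add: qmultinom_def of_nat_sum[symmetric])

lemma exponent_of_nat:
  "nat ((\<Sum>i\<in>Bset n - {Z0, Phi}. int (c i) * (int (c i) - 1)) + (\<Sum>i\<in>Bset n. int (H n b i) * int (c i)))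
   = quad_exp n c + lin_exp n b c"
proof -
  have "int (k * (k - 1)) = int k * (int k - 1)" for k by (cases k) (auto simp: algebra_simps)
  then have "(\<Sum>i\<in>Bset n - {Z0, Phi}. int (c i) * (int (c i) - 1)) = int (quad_exp n c)"
    unfolding quad_exp_def of_nat_sum by presburger
  moreover have "(\<Sum>i\<in>Bset n. int (H n b i) * int (c i)) = int (lin_exp n b c)"
    unfolding lin_exp_def of_nat_sum by simp
  ultimately show ?thesis by simp
qed

theorem mainTheorem17:
  fixes n j :: nat and b :: elt and m :: "nat \<Rightarrow> int"
  assumes "n \<ge> 2" and "b \<in> Bset n"
  shows "g n j b (muwt n m) =
    (\<Sum>\<gamma>\<in>{\<gamma> :: elt \<Rightarrow> int. (\<forall>x. x \<notin> Bset n \<longrightarrow> \<gamma> x = 0) \<and> (\<forall>x\<in>Bset n. \<gamma> x \<ge> 0) \<and>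
              (\<forall>i\<in>{1..n}. \<gamma> (U i) - \<gamma> (Bar i) = m i) \<and> (\<Sum>x\<in>Bset n. \<gamma> x) = int j}.
       qvar ^ nat ((\<Sum>i\<in>Bset n - {Z0, Phi}. \<gamma> i * (\<gamma> i - 1))
                   + (\<Sum>i\<in>Bset n. int (H n b i) * \<gamma> i))
       * qmultinom (qvar ^ 2) (Bset n) j \<gamma>)"
  (is "_ = (\<Sum>\<gamma>\<in>?G. ?R \<gamma>)")
proof -
  have "g n j b (muwt n m) = (\<Sum>c\<in>admissible_contents n j m. energy_gf (H n) b c)"
    by (rule g_eq_sum_energy_gf[OF assms(1)])
  also have "\<dots> = (\<Sum>c\<in>admissible_contents n j m.
      qvar ^ nat ((\<Sum>i\<in>Bset n - {Z0, Phi}. int (c i) * (int (c i) - 1))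
                  + (\<Sum>i\<in>Bset n. int (H n b i) * int (c i)))
      * qmultinom (qvar ^ 2) (Bset n) j (\<lambda>x. int (c x)))"
    by (rule sum.cong[OF refl])
       (auto simp: admissible_contents_def energy_gf_closed_form[OF assms(2)] exponent_of_nat qmultinom_of_nat)
  also have "\<dots> = (\<Sum>\<gamma>\<in>?G. ?R \<gamma>)"
    by (rule sum_admissible_contents_as_int[where F = ?R])
  finally show ?thesis .
qed

end
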